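(* Let $X$ be a real normed space and $\mathcal M=\{M_1,\dots,M_n\}$ a finite family of nonempty compact convex subsets of $X$, with $\Sigma(\mathcal M)\neq\emptyset$ and $d=(d_1,\dots,d_n)\in\Omega(\mathcal M)$. Then for every $K\in\Sigma_d(\mathcal M)$ there exist $i$ and $x\in M_i$ with $U_{d_i}(x)\cap K=\emptyset$. In particular, some $M_i$ contains a point $x$ with $U_{d_i}(x)\cap K_d=\emptyset$ (a $d$-far point for $M_i$).
   Context: For $p\in X$ and $A\subset X$: $|p\,A|=\inf_{a\in A}|p\,a|$ ($=\infty$ if $A=\emptyset$); $B_r(A)=\{p:|p\,A|\le r\}$, $U_r(x)=\{p:|p\,x|<r\}$. For nonempty $A,B$, $d_H(A,B)=\max\{\sup_{a\in A}|a\,B|,\sup_{b\in B}|b\,A|\}$. Let $\mathcal P^f_{\mathrm{Cl}}(X)$ be the set of all nonempty closed $Y\subset X$ with $d_H(Y,M_1)<\infty$. $S_{\mathcal M}(Y)=\sum_i d_H(Y,M_i)$; $\Sigma(\mathcal M)$ is the set of minimizers of $S_{\mathcal M}$ over $\mathcal P^f_{\mathrm{Cl}}(X)$; for $K\in\Sigma(\mathcal M)$, $d(K)=(d_H(K,M_1),\dots,d_H(K,M_n))$; $\Omega(\mathcal M)=\{d(K):K\in\Sigma(\mathcal M)\}$; for $d\in\Omega(\mathcal M)$, $\Sigma_d(\mathcal M)=\{K\in\Sigma(\mathcal M):d(K)=d\}$ and $K_d=\bigcap_{i=1}^nB_{d_i}(M_i)$. *)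

theory Defs
  imports "HOL-Analysis.Analysis"
begin

(* |p A| = inf_{a in A} |p a|, = \<infinity> for empty A (INF over {} is top) *)
definition pdist :: "'a::metric_space \<Rightarrow> 'a set \<Rightarrow> ereal" where
  "pdist p A = (INF a\<in>A. ereal (dist p a))"

definition dH :: "'a::metric_space set \<Rightarrow> 'a set \<Rightarrow> ereal" where
  "dH A B = max (SUP a\<in>A. pdist a B) (SUP b\<in>B. pdist b A)"

definition Bset :: "ereal \<Rightarrow> 'a::metric_space set \<Rightarrow> 'a set" where
  "Bset r A = {p. pdist p A \<le> r}"

definition Uball :: "ereal \<Rightarrow> 'a::metric_space \<Rightarrow> 'a set" where
  "Uball r x = {p. ereal (dist p x) < r}"

(* family M_1..M_n rendered as M 0 .. M (n-1) *)
definition PfCl :: "(nat \<Rightarrow> 'a::metric_space set) \<Rightarrow> 'a set set" where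
  "PfCl M = {Y. Y \<noteq> {} \<and> closed Y \<and> dH Y (M 0) < \<infinity>}"

definition SM :: "nat \<Rightarrow> (nat \<Rightarrow> 'a::metric_space set) \<Rightarrow> 'a set \<Rightarrow> ereal" where
  "SM n M Y = (\<Sum>i<n. dH Y (M i))"

definition SigmaM :: "nat \<Rightarrow> (nat \<Rightarrow> 'a::metric_space set) \<Rightarrow> 'a set set" where
  "SigmaM n M = {K \<in> PfCl M. \<forall>Y \<in> PfCl M. SM n M K \<le> SM n M Y}"

definition dvec :: "nat \<Rightarrow> (nat \<Rightarrow> 'a::metric_space set) \<Rightarrow> 'a set \<Rightarrow> nat \<Rightarrow> ereal" where
  "dvec n M K = (\<lambda>i. if i < n then dH K (M i) else 0)"

definition OmegaM :: "nat \<Rightarrow> (nat \<Rightarrow> 'a::metric_space set) \<Rightarrow> (nat \<Rightarrow> ereal) set" where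
  "OmegaM n M = dvec n M ` SigmaM n M"

definition SigmaD :: "nat \<Rightarrow> (nat \<Rightarrow> 'a::metric_space set) \<Rightarrow> (nat \<Rightarrow> ereal) \<Rightarrow> 'a set set" where
  "SigmaD n M d = {K \<in> SigmaM n M. dvec n M K = d}"

definition Kd :: "nat \<Rightarrow> (nat \<Rightarrow> 'a::metric_space set) \<Rightarrow> (nat \<Rightarrow> ereal) \<Rightarrow> 'a set" where
  "Kd n M d = (\<Inter>i<n. Bset (d i) (M i))"

end

(*
  Suppose a minimizer K of S has no far point. By compactness every M_i then lies
  uniformly within some r_i < d_i of K, and for every i some k_i in K lies within
  less than d_i of M_i. Shrink K toward the barycentre z of the k_i, i.e. replace
  it by (1-t) K + t z. Since x |-> |x M_i| is convex and |z M_i| < d_i, every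
  point of the new set is within (1-t) d_i + t |z M_i| < d_i of M_i; every point
  of M_i is within (1-t) r_i + t sup_{x in M_i} |x z| of the new set, which is
  < d_i for small t > 0. So all Hausdorff distances drop strictly, contradicting
  minimality.
  K_d contains every K with distance vector d, is closed, and is no farther from
  any M_i than K, hence is itself a minimizer with distance vector d.
*)
theory Submission
  imports Defs
begin

lemma pdist_eq_infdist: "A \<noteq> {} \<Longrightarrow> pdist p A = ereal (infdist p A)"
  unfolding pdist_def infdist_notempty
  using ereal_Inf'[of "dist p ` A"] by (simp add: image_comp)

lemma dH_commute: "dH A B = dH B A"
  unfolding dH_def by (rule max.commute)

lemma pdist_le_dH: "p \<in> A \<Longrightarrow> pdist p B \<le> dH A B"
  unfolding dH_def by (metis SUP_upper max.coboundedI1)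

lemma infdist_le_dH: "p \<in> A \<Longrightarrow> B \<noteq> {} \<Longrightarrow> ereal (infdist p B) \<le> dH A B"
  using pdist_le_dH pdist_eq_infdist by metis

lemma dH_le_ereal_iff:
  assumes "A \<noteq> {}" "B \<noteq> {}"
  shows "dH A B \<le> ereal c \<longleftrightarrow>
    (\<forall>a\<in>A. infdist a B \<le> c) \<and> (\<forall>b\<in>B. infdist b A \<le> c)"
  using assms by (simp add: dH_def pdist_eq_infdist SUP_le_iff)

lemma dH_nonneg: "A \<noteq> {} \<Longrightarrow> B \<noteq> {} \<Longrightarrow> 0 \<le> dH A B"
  by (metis infdist_le_dH ex_in_conv infdist_nonneg order.trans zero_ereal_def ereal_less_eq(3))

lemma dH_less_infinity_if_bounded:
  assumes "A \<noteq> {}" "B \<noteq> {}" "bounded A" "bounded B"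
  shows "dH A B < \<infinity>"
proof -
  have "bounded (A \<union> B)" using assms by simp
  then obtain D where D: "\<forall>x\<in>A \<union> B. \<forall>y\<in>A \<union> B. dist x y \<le> D"
    unfolding bounded_two_points by blast
  obtain a b where "a \<in> A" "b \<in> B" using assms by blast
  then have "dH A B \<le> ereal D"
    unfolding dH_le_ereal_iff[OF assms(1,2)] using D by (meson UnCI infdist_le2)
  moreover have "ereal D < \<infinity>" by simp
  ultimately show ?thesis by (rule order.strict_trans1)
qed

lemma closed_Bset: "A \<noteq> {} \<Longrightarrow> closed (Bset r A)"
  by (cases r) (auto simp: Bset_def pdist_eq_infdist intro!: closed_Collect_le continuous_intros)

lemma dH_le_if_superset:
  assumes "K \<subseteq> L" "\<And>p. p \<in> L \<Longrightarrow> pdist p A \<le> r" "dH K A \<le> r"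
  shows "dH L A \<le> r"
proof -
  have "pdist a L \<le> r" if "a \<in> A" for a
  proof -
    have "pdist a L \<le> pdist a K"
      unfolding pdist_def using assms(1) by (rule INF_superset_mono) simp
    also have "\<dots> \<le> dH K A"
      using pdist_le_dH[OF that] dH_commute by metis
    finally show ?thesis using assms(3) by simp
  qed
  then show ?thesis
    using assms(2) unfolding dH_def by (simp add: SUP_le_iff)
qed

lemma dist_convex_combination_le:
  fixes a b m m' :: "'a::real_normed_vector"
  assumes "0 \<le> t" "t \<le> 1"
  shows "dist ((1-t) *\<^sub>R a + t *\<^sub>R b) ((1-t) *\<^sub>R m + t *\<^sub>R m') \<le> (1-t) * dist a m + t * dist b m'"
proof -
  have "dist ((1-t) *\<^sub>R a + t *\<^sub>R b) ((1-t) *\<^sub>R m + t *\<^sub>R m') =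
      norm ((1-t) *\<^sub>R (a - m) + t *\<^sub>R (b - m'))"
    by (simp add: dist_norm algebra_simps)
  also have "\<dots> \<le> norm ((1-t) *\<^sub>R (a - m)) + norm (t *\<^sub>R (b - m'))"
    by (rule norm_triangle_ineq)
  also have "\<dots> = (1-t) * dist a m + t * dist b m'"
    using assms by (simp add: dist_norm)
  finally show ?thesis .
qed

lemma le_scaled_infdist:
  assumes "A \<noteq> {}" "0 \<le> s" "\<And>m. m \<in> A \<Longrightarrow> c \<le> s * dist x m + r"
  shows "c \<le> s * infdist x A + r"
proof (cases "s = 0")
  case True
  then show ?thesis using assms by auto
next
  case False
  with assms(2) have "0 < s" by simp
  have "(c - r) / s \<le> infdist x A"
    unfolding infdist_notempty[OF assms(1)]
  proof (rule cINF_greatest[OF assms(1)])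
    fix m assume "m \<in> A"
    then show "(c - r) / s \<le> dist x m"
      using assms(3)[of m] \<open>0 < s\<close> by (simp add: divide_le_eq mult.commute)
  qed
  then show ?thesis using \<open>0 < s\<close> by (simp add: divide_le_eq mult.commute)
qed

lemma infdist_convex_combination_le:
  fixes A :: "'a::real_normed_vector set"
  assumes "convex A" "A \<noteq> {}" "0 \<le> t" "t \<le> 1"
  shows "infdist ((1-t) *\<^sub>R a + t *\<^sub>R b) A \<le> (1-t) * infdist a A + t * infdist b A"
proof -
  have "infdist ((1-t) *\<^sub>R a + t *\<^sub>R b) A \<le> (1-t) * infdist a A + t * dist b m'"
    if "m' \<in> A" for m'
  proof (rule le_scaled_infdist[OF assms(2)])
    fix m assume "m \<in> A"
    then have "(1-t) *\<^sub>R m + t *\<^sub>R m' \<in> A"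
      using assms \<open>m' \<in> A\<close> convexD_alt by blast
    then have "infdist ((1-t) *\<^sub>R a + t *\<^sub>R b) A \<le>
        dist ((1-t) *\<^sub>R a + t *\<^sub>R b) ((1-t) *\<^sub>R m + t *\<^sub>R m')"
      by (rule infdist_le)
    also have "\<dots> \<le> (1-t) * dist a m + t * dist b m'"
      using assms by (intro dist_convex_combination_le)
    finally show "infdist ((1-t) *\<^sub>R a + t *\<^sub>R b) A \<le> (1-t) * dist a m + t * dist b m'" .
  qed (use assms in simp)
  then have "infdist ((1-t) *\<^sub>R a + t *\<^sub>R b) A \<le> t * infdist b A + (1-t) * infdist a A"
    by (intro le_scaled_infdist[OF assms(2,3)]) (simp add: add.commute)
  then show ?thesis by simp
qed

lemma convex_on_infdist:
  fixes A :: "'a::real_normed_vector set"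
  assumes "convex A" "A \<noteq> {}"
  shows "convex_on UNIV (\<lambda>x. infdist x A)"
  by (rule convex_onI) (use infdist_convex_combination_le[OF assms] in auto)

lemma infdist_mean_less:
  fixes A :: "'a::real_normed_vector set"
  assumes "convex A" "A \<noteq> {}" "finite I" "j \<in> I"
    and "\<And>i. i \<in> I \<Longrightarrow> infdist (k i) A \<le> e" "infdist (k j) A < e"
  shows "infdist (\<Sum>i\<in>I. (1 / card I) *\<^sub>R k i) A < e"
proof -
  have "card I > 0" using assms(3,4) card_gt_0_iff by blast
  have "infdist (\<Sum>i\<in>I. (1 / card I) *\<^sub>R k i) A \<le> (\<Sum>i\<in>I. (1 / card I) * infdist (k i) A)"
    using assms(3,4) \<open>card I > 0\<close>
    by (intro convex_on_sum[OF _ _ convex_on_infdist[OF assms(1,2)]]) auto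
  also have "\<dots> < (\<Sum>i\<in>I. (1 / card I) * e)"
    using assms \<open>card I > 0\<close>
    by (intro sum_strict_mono_ex1) (auto intro!: bexI[of _ j] divide_right_mono divide_strict_right_mono)
  also have "\<dots> = e" using \<open>card I > 0\<close> by simp
  finally show ?thesis .
qed

lemma compact_infdist_le_less:
  assumes "compact A" "A \<noteq> {}" "\<And>x. x \<in> A \<Longrightarrow> \<exists>p\<in>K. dist p x < e"
  shows "\<exists>r<e. \<forall>x\<in>A. infdist x K \<le> r"
proof -
  obtain x0 where "x0 \<in> A" and x0: "\<forall>x\<in>A. infdist x K \<le> infdist x0 K"
    using continuous_attains_sup[OF assms(1,2)] continuous_on_infdist[OF continuous_on_id]
    by blast
  obtain p where "p \<in> K" "dist p x0 < e" using assms(3) \<open>x0 \<in> A\<close> by blast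
  then have "infdist x0 K < e" using infdist_le[of p K x0] by (simp add: dist_commute)
  then show ?thesis using x0 by blast
qed

lemma infdist_shrink_toward_le:
  fixes K :: "'a::real_normed_vector set"
  assumes "K \<noteq> {}" "0 \<le> t" "t \<le> 1"
  shows "infdist x ((\<lambda>k. (1-t) *\<^sub>R k + t *\<^sub>R z) ` K) \<le> (1-t) * infdist x K + t * dist x z"
proof (rule le_scaled_infdist[OF assms(1)])
  fix k assume "k \<in> K"
  then have "infdist x ((\<lambda>k. (1-t) *\<^sub>R k + t *\<^sub>R z) ` K) \<le> dist x ((1-t) *\<^sub>R k + t *\<^sub>R z)"
    by (intro infdist_le imageI)
  also have "\<dots> = dist ((1-t) *\<^sub>R x + t *\<^sub>R x) ((1-t) *\<^sub>R k + t *\<^sub>R z)"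
    by (simp add: scaleR_left_distrib[symmetric])
  also have "\<dots> \<le> (1-t) * dist x k + t * dist x z"
    using assms by (intro dist_convex_combination_le)
  finally show "infdist x ((\<lambda>k. (1-t) *\<^sub>R k + t *\<^sub>R z) ` K) \<le> (1-t) * dist x k + t * dist x z" .
qed (use assms in simp)

lemma dH_shrink_toward_le:
  fixes K A :: "'a::real_normed_vector set"
  assumes "K \<noteq> {}" "A \<noteq> {}" "convex A" "0 \<le> t" "t \<le> 1"
    and "\<And>k. k \<in> K \<Longrightarrow> infdist k A \<le> e"
    and "\<And>x. x \<in> A \<Longrightarrow> infdist x K \<le> r"
    and "\<And>x. x \<in> A \<Longrightarrow> dist x z \<le> D"
  shows "dH ((\<lambda>k. (1-t) *\<^sub>R k + t *\<^sub>R z) ` K) A \<le>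
    ereal (max ((1-t) * e + t * infdist z A) ((1-t) * r + t * D))"
    (is "dH ?Y A \<le> ereal ?c")
proof -
  have "infdist y A \<le> ?c" if "y \<in> ?Y" for y
  proof -
    obtain k where "k \<in> K" "y = (1-t) *\<^sub>R k + t *\<^sub>R z" using \<open>y \<in> ?Y\<close> by blast
    then have "infdist y A \<le> (1-t) * infdist k A + t * infdist z A"
      using assms by (simp add: infdist_convex_combination_le)
    also have "\<dots> \<le> (1-t) * e + t * infdist z A"
      using assms \<open>k \<in> K\<close> by (simp add: mult_left_mono)
    finally show ?thesis by simp
  qed
  moreover have "infdist x ?Y \<le> ?c" if "x \<in> A" for x
  proof -
    have "infdist x ?Y \<le> (1-t) * infdist x K + t * dist x z"
      using assms by (intro infdist_shrink_toward_le)
    also have "\<dots> \<le> (1-t) * r + t * D"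
      using assms \<open>x \<in> A\<close> by (intro add_mono mult_left_mono) auto
    finally show ?thesis by simp
  qed
  moreover have "?Y \<noteq> {}" using assms(1) by simp
  ultimately show ?thesis
    using dH_le_ereal_iff[of ?Y A ?c] assms(2) by blast
qed

lemma eventually_dH_shrink_toward_less:
  fixes K A :: "'a::real_normed_vector set"
  assumes "K \<noteq> {}" "A \<noteq> {}" "convex A" "bounded A"
    and "\<And>k. k \<in> K \<Longrightarrow> infdist k A \<le> e"
    and "\<And>x. x \<in> A \<Longrightarrow> infdist x K \<le> r" "r < e" "infdist z A < e"
  shows "\<forall>\<^sub>F t in at_right 0. dH ((\<lambda>k. (1-t) *\<^sub>R k + t *\<^sub>R z) ` K) A < ereal e"
proof -
  obtain D where D: "\<And>x. x \<in> A \<Longrightarrow> dist x z \<le> D"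
    using assms(4) bounded_any_center dist_commute by metis
  have "((\<lambda>t. (1-t) * r + t * D) \<longlongrightarrow> (1-0) * r + 0 * D) (at_right 0)"
    by (intro tendsto_intros)
  then have "\<forall>\<^sub>F t in at_right 0. (1-t) * r + t * D < e"
    by (rule order_tendstoD) (use assms(7) in simp)
  moreover have "\<forall>\<^sub>F t in at_right 0. t < (1::real)"
    by (rule order_tendstoD[OF tendsto_ident_at]) simp
  ultimately show ?thesis
    using eventually_at_right_less[of 0]
  proof eventually_elim
    case (elim t)
    have "(1-t) * e + t * infdist z A < e"
      using \<open>0 < t\<close> assms(8) by (simp add: algebra_simps)
    then have "max ((1-t) * e + t * infdist z A) ((1-t) * r + t * D) < e"
      using elim by simp
    moreover have "dH ((\<lambda>k. (1-t) *\<^sub>R k + t *\<^sub>R z) ` K) A \<le>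
        ereal (max ((1-t) * e + t * infdist z A) ((1-t) * r + t * D))"
      using assms elim D by (intro dH_shrink_toward_le) auto
    ultimately show ?case by (simp add: order.strict_trans1)
  qed
qed

lemma SigmaM_dH_finite:
  assumes M: "\<And>i. i < n \<Longrightarrow> M i \<noteq> {} \<and> compact (M i)"
    and K: "K \<in> SigmaM n M" and "i < n"
  shows "\<bar>dH K (M i)\<bar> \<noteq> \<infinity>"
proof -
  have K_min: "SM n M K \<le> SM n M Y" if "Y \<in> PfCl M" for Y
    using K that unfolding SigmaM_def by blast
  have "K \<noteq> {}" using K unfolding SigmaM_def PfCl_def by blast
  have M0_dH_finite: "dH (M 0) (M j) < \<infinity>" if "j < n" for j
    using M[of 0] M[OF that] \<open>i < n\<close> by (intro dH_less_infinity_if_bounded) (auto intro: compact_imp_bounded)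
  then have "M 0 \<in> PfCl M"
    using M[of 0] \<open>i < n\<close> unfolding PfCl_def by (auto intro: compact_imp_closed)
  moreover have "SM n M (M 0) \<noteq> \<infinity>"
    unfolding SM_def sum_Pinfty using M0_dH_finite by auto
  ultimately have "SM n M K \<noteq> \<infinity>"
    using K_min by (metis ereal_infty_less_eq(1))
  then have "dH K (M i) \<noteq> \<infinity>"
    unfolding SM_def sum_Pinfty using \<open>i < n\<close> by auto
  moreover have "0 \<le> dH K (M i)"
    using dH_nonneg \<open>K \<noteq> {}\<close> M[OF \<open>i < n\<close>] by blast
  ultimately show ?thesis by auto
qed

lemma SigmaD_if_dominated:
  assumes M: "\<And>i. i < n \<Longrightarrow> M i \<noteq> {} \<and> compact (M i)"
    and K: "K \<in> SigmaM n M" and Y: "Y \<in> PfCl M"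
    and le: "\<And>i. i < n \<Longrightarrow> dH Y (M i) \<le> dH K (M i)"
  shows "Y \<in> SigmaD n M (dvec n M K)"
proof -
  define e where "e i = real_of_ereal (dH K (M i))" for i
  define a where "a i = real_of_ereal (dH Y (M i))" for i
  have e: "dH K (M i) = ereal (e i)" if "i < n" for i
    unfolding e_def using SigmaM_dH_finite[OF M K that] by (simp add: ereal_real')
  have a: "dH Y (M i) = ereal (a i)" if "i < n" for i
  proof -
    have "0 \<le> dH Y (M i)" using Y M[OF that] dH_nonneg unfolding PfCl_def by blast
    then show ?thesis using le[OF that] e[OF that] unfolding a_def by (cases "dH Y (M i)") auto
  qed
  have a_le_e: "a i \<le> e i" if "i < n" for i using le[OF that] a[OF that] e[OF that] by simp
  have SM_K: "SM n M K = ereal (\<Sum>i<n. e i)" and SM_Y: "SM n M Y = ereal (\<Sum>i<n. a i)"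
    unfolding SM_def sum_ereal[symmetric] using a e by (auto intro: sum.cong)
  have "SM n M K \<le> SM n M Y" using K Y unfolding SigmaM_def by blast
  moreover have "(\<Sum>i<n. a i) \<le> (\<Sum>i<n. e i)"
    using a_le_e by (intro sum_mono) simp
  ultimately have sum_eq: "(\<Sum>i<n. a i) = (\<Sum>i<n. e i)"
    using SM_K SM_Y by simp
  then have "a i = e i" if "i < n" for i
    using sum_mono_inv[of a "{..<n}" e i] a_le_e that by simp
  then have "dvec n M Y = dvec n M K"
    using a e by (auto simp: dvec_def)
  moreover have "SM n M Y = SM n M K"
    using SM_K SM_Y sum_eq by simp
  ultimately show ?thesis
    using K Y unfolding SigmaD_def SigmaM_def by simp
qed

lemma SigmaM_no_strict_improvement:
  assumes "n \<ge> 1"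
    and M: "\<And>i. i < n \<Longrightarrow> M i \<noteq> {} \<and> compact (M i)"
    and K: "K \<in> SigmaM n M" and "Y \<noteq> {}" "closed Y"
    and less: "\<And>i. i < n \<Longrightarrow> dH Y (M i) < dH K (M i)"
  shows False
proof -
  have less0: "dH Y (M 0) < dH K (M 0)" using less \<open>n \<ge> 1\<close> by simp
  moreover have "dH K (M 0) < \<infinity>" using K unfolding SigmaM_def PfCl_def by blast
  ultimately have "dH Y (M 0) < \<infinity>" by (rule order.strict_trans)
  then have "Y \<in> PfCl M" using assms(4,5) unfolding PfCl_def by blast
  then have "Y \<in> SigmaD n M (dvec n M K)"
    using less by (intro SigmaD_if_dominated[OF M K]) (auto intro: less_imp_le)
  then have "dvec n M Y 0 = dvec n M K 0" unfolding SigmaD_def by simp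
  then show False using less0 \<open>n \<ge> 1\<close> unfolding dvec_def by simp
qed

lemma closed_shrink_toward:
  fixes K :: "'a::real_normed_vector set"
  assumes "closed K"
  shows "closed ((\<lambda>k. (1-t) *\<^sub>R k + t *\<^sub>R z) ` K)"
  using closed_translation[OF closed_scaling[OF assms, of "1-t"], of "t *\<^sub>R z"]
  by (simp add: image_image add.commute)

lemma SigmaM_far_point:
  fixes M :: "nat \<Rightarrow> 'a::real_normed_vector set"
  assumes "n \<ge> 1"
    and M: "\<And>i. i < n \<Longrightarrow> M i \<noteq> {} \<and> compact (M i) \<and> convex (M i)"
    and K: "K \<in> SigmaM n M"
  shows "\<exists>i<n. \<exists>x \<in> M i. Uball (dH K (M i)) x \<inter> K = {}"
proof (rule ccontr)
  assume no_far_point: "\<not> ?thesis"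
  have "K \<noteq> {}" and "closed K" using K unfolding SigmaM_def PfCl_def by auto
  define e where "e i = real_of_ereal (dH K (M i))" for i
  have e: "dH K (M i) = ereal (e i)" if "i < n" for i
    unfolding e_def using SigmaM_dH_finite[OF _ K that] M by (simp add: ereal_real')
  have K_close: "infdist k (M i) \<le> e i" if "i < n" "k \<in> K" for i k
    using infdist_le_dH[OF that(2), of "M i"] M[OF that(1)] e[OF that(1)] by simp
  have near: "\<exists>p\<in>K. dist p x < e i" if "i < n" "x \<in> M i" for i x
  proof -
    have "Uball (dH K (M i)) x \<inter> K \<noteq> {}" using no_far_point that by blast
    then show ?thesis using e[OF that(1)] unfolding Uball_def by (auto simp: dist_commute)
  qed
  have "\<exists>k\<in>K. infdist k (M i) < e i" if "i < n" for i
  proof -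
    obtain x where "x \<in> M i" using M[OF \<open>i < n\<close>] by blast
    then obtain p where "p \<in> K" "dist p x < e i" using near \<open>i < n\<close> by blast
    then show ?thesis using infdist_le[OF \<open>x \<in> M i\<close>, of p] by force
  qed
  then obtain k where k: "\<And>i. i < n \<Longrightarrow> k i \<in> K \<and> infdist (k i) (M i) < e i" by metis
  have "\<exists>r<e i. \<forall>x\<in>M i. infdist x K \<le> r" if "i < n" for i
    using M[OF that] near[OF that] by (intro compact_infdist_le_less) auto
  then obtain r where r: "\<And>i. i < n \<Longrightarrow> r i < e i \<and> (\<forall>x\<in>M i. infdist x K \<le> r i)" by metis
  define z where "z = (\<Sum>i<n. (1 / card {..<n}) *\<^sub>R k i)"
  have z: "infdist z (M j) < e j" if "j < n" for j
    unfolding z_def using M[OF that] k K_close that by (intro infdist_mean_less) auto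
  define Y where "Y t = (\<lambda>k. (1-t) *\<^sub>R k + t *\<^sub>R z) ` K" for t
  have "\<forall>\<^sub>F t in at_right 0. \<forall>j\<in>{..<n}. dH (Y t) (M j) < ereal (e j)"
    unfolding Y_def using M K_close r z \<open>K \<noteq> {}\<close>
    by (intro eventually_ball_finite ballI eventually_dH_shrink_toward_less)
      (auto intro: compact_imp_bounded)
  then obtain t where "\<forall>j\<in>{..<n}. dH (Y t) (M j) < ereal (e j)"
    using eventually_happens'[OF trivial_limit_at_right_real] by blast
  moreover have "Y t \<noteq> {}" and "closed (Y t)"
    using \<open>K \<noteq> {}\<close> \<open>closed K\<close> closed_shrink_toward unfolding Y_def by auto
  ultimately show False
    using SigmaM_no_strict_improvement[of n M K "Y t"] \<open>n \<ge> 1\<close> M K e by auto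
qed

lemma Kd_in_SigmaD:
  assumes "n \<ge> 1"
    and M: "\<And>i. i < n \<Longrightarrow> M i \<noteq> {} \<and> compact (M i)"
    and K: "K \<in> SigmaD n M d"
  shows "Kd n M d \<in> SigmaD n M d"
proof -
  have K_min: "K \<in> SigmaM n M" and d: "\<And>i. i < n \<Longrightarrow> d i = dH K (M i)"
    using K unfolding SigmaD_def dvec_def by auto
  have "K \<noteq> {}" and K_fin: "dH K (M 0) < \<infinity>"
    using K_min unfolding SigmaM_def PfCl_def by auto
  have Kd_le: "pdist p (M i) \<le> d i" if "p \<in> Kd n M d" "i < n" for p i
    using that unfolding Kd_def Bset_def by blast
  have "K \<subseteq> Kd n M d"
  proof
    fix p assume "p \<in> K"
    then have "pdist p (M i) \<le> d i" if "i < n" for i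
      using pdist_le_dH d[OF that] by simp
    then show "p \<in> Kd n M d"
      unfolding Kd_def Bset_def by blast
  qed
  have le: "dH (Kd n M d) (M i) \<le> dH K (M i)" if "i < n" for i
  proof (rule dH_le_if_superset[OF \<open>K \<subseteq> Kd n M d\<close>])
    show "pdist p (M i) \<le> dH K (M i)" if "p \<in> Kd n M d" for p
      using Kd_le[OF that \<open>i < n\<close>] d[OF \<open>i < n\<close>] by simp
  qed simp
  have "Kd n M d \<noteq> {}" using \<open>K \<subseteq> Kd n M d\<close> \<open>K \<noteq> {}\<close> by blast
  moreover have "closed (Kd n M d)"
    unfolding Kd_def using M by (intro closed_INT ballI closed_Bset) auto
  moreover have "dH (Kd n M d) (M 0) < \<infinity>"
    using le \<open>n \<ge> 1\<close> order.strict_trans1[OF _ K_fin] by simp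
  ultimately have "Kd n M d \<in> PfCl M" unfolding PfCl_def by blast
  then have "Kd n M d \<in> SigmaD n M (dvec n M K)"
    using le by (intro SigmaD_if_dominated[OF M K_min])
  moreover have "dvec n M K = d" using K unfolding SigmaD_def by blast
  ultimately show ?thesis by simp
qed

theorem mainTheorem19:
  fixes M :: "nat \<Rightarrow> 'a::real_normed_vector set" and n :: nat and d :: "nat \<Rightarrow> ereal"
  assumes "n \<ge> 1"
    and "\<And>i. i < n \<Longrightarrow> M i \<noteq> {} \<and> compact (M i) \<and> convex (M i)"
    and "SigmaM n M \<noteq> {}"
    and "d \<in> OmegaM n M"
  shows "(\<forall>K \<in> SigmaD n M d. \<exists>i<n. \<exists>x \<in> M i. Uball (d i) x \<inter> K = {})
         \<and> (\<exists>i<n. \<exists>x \<in> M i. Uball (d i) x \<inter> Kd n M d = {})"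
proof -
  have far: "\<exists>i<n. \<exists>x \<in> M i. Uball (d i) x \<inter> K = {}" if "K \<in> SigmaD n M d" for K
  proof -
    have K: "K \<in> SigmaM n M" and d: "\<And>i. i < n \<Longrightarrow> d i = dH K (M i)"
      using that unfolding SigmaD_def dvec_def by auto
    obtain i x where "i < n" "x \<in> M i" "Uball (dH K (M i)) x \<inter> K = {}"
      using SigmaM_far_point[of n M K, OF assms(1,2) K] by blast
    then have "Uball (d i) x \<inter> K = {}" using d by simp
    with \<open>i < n\<close> \<open>x \<in> M i\<close> show ?thesis by blast
  qed
  \<comment> \<open>The hypothesis \<open>SigmaM n M \<noteq> {}\<close> is implied by \<open>d \<in> OmegaM n M\<close>.\<close>
  obtain K where "K \<in> SigmaD n M d"
    using assms(4) unfolding OmegaM_def SigmaD_def by blast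
  then have "Kd n M d \<in> SigmaD n M d"
    using assms(2) by (intro Kd_in_SigmaD[of n M K d, OF assms(1)]) simp_all
  then show ?thesis using far by blast
qed

end
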